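(* For every positive integer $m$ and every complex number $\alpha \neq 0$, $$\sum_{k=1}^m H_k\, k^\alpha = \sum_{j=1}^m j!\, S(\alpha, j) \binom{m+1}{j+1} \left(H_{m+1} - \frac{1}{j+1}\right).$$
   Context: For a complex number $\alpha \neq 0$ and a positive integer $k$, the Stirling function of the second kind is $$S(\alpha, k) = \frac{1}{k!} \sum_{j=1}^k (-1)^{k-j} \binom{k}{j} j^\alpha,$$ where for a positive integer $j$, $j^\alpha = e^{\alpha \ln j}$ with $\ln j$ the real logarithm. $H_k = 1 + \frac12 + \cdots + \frac1k$ denotes the $k$-th harmonic number. *)

theory Defs
  imports "HOL-Analysis.Analysis"
begin

definition npow :: "nat \<Rightarrow> complex \<Rightarrow> complex" where
  "npow j \<alpha> = exp (\<alpha> * complex_of_real (ln (real j)))"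

definition stirling_fun :: "complex \<Rightarrow> nat \<Rightarrow> complex" where
  "stirling_fun \<alpha> k = (1 / of_nat (fact k)) *
     (\<Sum>j=1..k. (-1) ^ (k - j) * of_nat (k choose j) * npow j \<alpha>)"

end

theory Submission
  imports Defs
begin

text \<open>
  Write \<open>a\<^sub>j = j! S(\<alpha>,j) = \<Sum>\<^sub>i (-1)\<^sup>j\<^sup>-\<^sup>i C(j,i) i\<^sup>\<alpha>\<close>.  By binomial inversion
  (the inverse of the binomial transform is the alternating binomial transform) one has
  Newton's expansion \<open>k\<^sup>\<alpha> = \<Sum>\<^sub>j C(k,j) a\<^sub>j\<close> for every \<open>k \<ge> 1\<close>.  Substituting this into
  \<open>\<Sum>\<^sub>k H\<^sub>k k\<^sup>\<alpha>\<close> and exchanging the order of summation reduces the claim to the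
  classical harmonic-binomial identity
  \<open>\<Sum>\<^sub>k\<^sub>=\<^sub>1\<^sup>m H\<^sub>k C(k,j) = C(m+1,j+1) (H\<^sub>m\<^sub>+\<^sub>1 - 1/(j+1))\<close>,
  proved by induction on \<open>m\<close>.
\<close>

lemma binomial_orthogonality:
  fixes j k :: nat
  assumes "j \<le> k"
  shows "(\<Sum>i=j..k. of_nat (k choose i) * (-1) ^ (i - j) * of_nat (i choose j))
         = (if j = k then 1 else (0 :: 'a :: comm_ring_1))"
proof -
  have "(\<Sum>i=j..k. of_nat (k choose i) * (-1) ^ (i - j) * of_nat (i choose j))
      = (\<Sum>i=j..k. of_nat (k choose j) * ((-1) ^ (i - j) * of_nat ((k - j) choose (i - j))) :: 'a)"
  proof (rule sum.cong [OF refl])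
    fix i assume "i \<in> {j..k}"
    then have "(k choose i) * (i choose j) = (k choose j) * ((k - j) choose (i - j))"
      by (intro choose_mult) auto
    then have "(of_nat (k choose i) * of_nat (i choose j) :: 'a)
             = of_nat (k choose j) * of_nat ((k - j) choose (i - j))"
      by (metis of_nat_mult)
    then show "of_nat (k choose i) * (-1) ^ (i - j) * of_nat (i choose j)
             = (of_nat (k choose j) * ((-1) ^ (i - j) * of_nat ((k - j) choose (i - j))) :: 'a)"
      by (metis mult.assoc mult.commute)
  qed
  also have "\<dots> = of_nat (k choose j) * (\<Sum>i=j..k. (-1) ^ (i - j) * of_nat ((k - j) choose (i - j)))"
    by (simp add: sum_distrib_left)
  also have "\<dots> = of_nat (k choose j) * (\<Sum>l=0..k-j. (-1) ^ l * of_nat ((k - j) choose l))"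
    using sum.shift_bounds_cl_nat_ivl
        [of "\<lambda>i. (-1) ^ (i - j) * (of_nat ((k - j) choose (i - j)) :: 'a)" 0 j "k - j"] assms
    by simp
  also have "\<dots> = (if j = k then 1 else 0)"
    using choose_alternating_sum [of "k - j", where 'a='a] assms
    by (auto simp: atLeast0AtMost)
  finally show ?thesis .
qed

lemma binomial_inversion:
  fixes f :: "nat \<Rightarrow> 'a :: comm_ring_1"
  assumes "1 \<le> k"
  shows "(\<Sum>i=1..k. of_nat (k choose i) * (\<Sum>j=1..i. (-1) ^ (i - j) * of_nat (i choose j) * f j)) = f k"
proof -
  let ?c = "\<lambda>i j. of_nat (k choose i) * (-1) ^ (i - j) * (of_nat (i choose j) :: 'a)"
  have extend_inner: "(\<Sum>j=1..i. (-1) ^ (i - j) * of_nat (i choose j) * f j)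
      = (\<Sum>j=1..k. (-1) ^ (i - j) * of_nat (i choose j) * f j)" if "i \<le> k" for i
    by (rule sum.mono_neutral_left) (use that in \<open>auto simp: binomial_eq_0\<close>)
  have restrict_outer: "(\<Sum>i=1..k. ?c i j) = (\<Sum>i=j..k. ?c i j)" if "j \<in> {1..k}" for j
    by (rule sum.mono_neutral_right) (use that in \<open>auto simp: binomial_eq_0\<close>)
  have "(\<Sum>i=1..k. of_nat (k choose i) * (\<Sum>j=1..i. (-1) ^ (i - j) * of_nat (i choose j) * f j))
      = (\<Sum>i=1..k. \<Sum>j=1..k. ?c i j * f j)"
    by (intro sum.cong refl, subst extend_inner) (auto simp: sum_distrib_left mult.assoc)
  also have "\<dots> = (\<Sum>j=1..k. (\<Sum>i=1..k. ?c i j) * f j)"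
    by (subst sum.swap) (simp add: sum_distrib_right)
  also have "\<dots> = (\<Sum>j=1..k. if j = k then f j else 0)"
  proof (intro sum.cong refl)
    fix j assume j: "j \<in> {1..k}"
    show "(\<Sum>i=1..k. ?c i j) * f j = (if j = k then f j else 0)"
      unfolding restrict_outer [OF j] using j by (simp add: binomial_orthogonality)
  qed
  also have "\<dots> = f k"
    using assms by simp
  finally show ?thesis .
qed

lemma npow_newton_expansion:
  assumes "1 \<le> k"
  shows "npow k \<alpha> = (\<Sum>j=1..k. of_nat (k choose j) * (of_nat (fact j) * stirling_fun \<alpha> j))"
  using binomial_inversion [OF assms, of "\<lambda>j. npow j \<alpha>"]
  by (simp add: stirling_fun_def)

lemma harm_binomial_sum:
  fixes m i :: nat
  shows "(\<Sum>k=1..m. harm k * of_nat (k choose i) :: 'a :: real_normed_field)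
       = of_nat ((m + 1) choose (i + 1)) * (harm (m + 1) - 1 / of_nat (i + 1))"
proof (induction m)
  case 0
  then show ?case by (cases i) (simp_all add: harm_def)
next
  case (Suc m)
  have pascal: "(of_nat (Suc (Suc m) choose Suc i) :: 'a)
              = of_nat (Suc m choose Suc i) + of_nat (Suc m choose i)"
    by simp
  have absorption: "(of_nat (Suc (Suc m) choose Suc i) :: 'a) / of_nat (Suc (Suc m))
                  = of_nat (Suc m choose i) / of_nat (Suc i)"
  proof -
    have "(of_nat (Suc (Suc m)) * of_nat (Suc m choose i) :: 'a)
        = of_nat (Suc (Suc m) choose Suc i) * of_nat (Suc i)"
      by (metis Suc_times_binomial_eq of_nat_mult)
    then show ?thesis
      by (simp add: divide_simps mult.commute del: of_nat_Suc binomial_Suc_Suc)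
  qed
  have "(\<Sum>k=1..Suc m. harm k * of_nat (k choose i) :: 'a)
      = of_nat ((m + 1) choose (i + 1)) * (harm (m + 1) - 1 / of_nat (i + 1))
        + harm (Suc m) * of_nat (Suc m choose i)"
    using Suc by simp
  also have "\<dots> = of_nat (Suc (Suc m) choose Suc i) * (harm (Suc m) - 1 / of_nat (Suc i))
                 + of_nat (Suc (Suc m) choose Suc i) / of_nat (Suc (Suc m))"
    unfolding absorption by (simp add: pascal field_simps del: of_nat_Suc binomial_Suc_Suc)
  also have "\<dots> = of_nat (Suc (Suc m) choose Suc i) * (harm (Suc (Suc m)) - 1 / of_nat (Suc i))"
    by (simp add: harm_Suc [of "Suc m"] field_simps del: of_nat_Suc binomial_Suc_Suc)
  finally show ?case by simp
qed

lemma harm_weighted_binomial_transform: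
  fixes g :: "nat \<Rightarrow> 'a :: real_normed_field"
  shows "(\<Sum>k=1..m. harm k * (\<Sum>j=1..k. of_nat (k choose j) * g j))
       = (\<Sum>j=1..m. g j * of_nat ((m + 1) choose (j + 1)) * (harm (m + 1) - 1 / of_nat (j + 1)))"
proof -
  have extend: "(\<Sum>j=1..k. of_nat (k choose j) * g j) = (\<Sum>j=1..m. of_nat (k choose j) * g j)"
    if "k \<le> m" for k
    by (rule sum.mono_neutral_left) (use that in auto)
  have "(\<Sum>k=1..m. harm k * (\<Sum>j=1..k. of_nat (k choose j) * g j))
      = (\<Sum>k=1..m. \<Sum>j=1..m. harm k * of_nat (k choose j) * g j)"
    by (intro sum.cong refl, subst extend) (auto simp: sum_distrib_left mult.assoc)
  also have "\<dots> = (\<Sum>j=1..m. (\<Sum>k=1..m. harm k * of_nat (k choose j)) * g j)"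
    by (subst sum.swap) (simp add: sum_distrib_right)
  also have "\<dots> = (\<Sum>j=1..m. g j * of_nat ((m + 1) choose (j + 1)) * (harm (m + 1) - 1 / of_nat (j + 1)))"
    by (intro sum.cong refl) (simp only: harm_binomial_sum, simp add: algebra_simps)
  finally show ?thesis .
qed

theorem proposition4:
  fixes m :: nat and \<alpha> :: complex
  assumes "m \<ge> 1" and "\<alpha> \<noteq> 0"
  shows "(\<Sum>k=1..m. harm k * npow k \<alpha>) =
         (\<Sum>j=1..m. of_nat (fact j) * stirling_fun \<alpha> j * of_nat ((m + 1) choose (j + 1))
                       * (harm (m + 1) - 1 / of_nat (j + 1)))"
proof -
  have "(\<Sum>k=1..m. harm k * npow k \<alpha>)
      = (\<Sum>k=1..m. harm k * (\<Sum>j=1..k. of_nat (k choose j) * (of_nat (fact j) * stirling_fun \<alpha> j)))"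
    by (intro sum.cong refl) (simp add: npow_newton_expansion)
  also have "\<dots> = (\<Sum>j=1..m. of_nat (fact j) * stirling_fun \<alpha> j * of_nat ((m + 1) choose (j + 1))
                       * (harm (m + 1) - 1 / of_nat (j + 1)))"
    by (rule harm_weighted_binomial_transform)
  finally show ?thesis .
qed

end
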